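(* Let $A$ be any of $L_d$, $C_d$ ($d\in\{2,3,\dots\}$), or $L_\infty$. Let $p\in[1,\infty)$, let $(X,\mathcal{B},\mu)$ be a $\sigma$-finite measure space, and let $\rho\colon A\to L(L^p(X,\mu))$ be a representation. Let $u\in L(l^p(\mathbb{Z}))$ be the bilateral shift $(u\eta)(m)=\eta(m-1)$, and let $\rho_u\colon A\to L(L^p(X\times\mathbb{Z},\mu\times\nu))$ ($\nu$ counting measure) be the unique representation with $\rho_u(s_j)=\rho(s_j)\otimes u$ and $\rho_u(t_j)=\rho(t_j)\otimes u^{-1}$ for all $j$. Then $\|\rho_u(a)\|\ge\|\rho(a)\|$ for every $a\in A$.
   Context: $L_d$ is the universal complex unital algebra generated by $s_1,\dots,s_d,t_1,\dots,t_d$ with $t_js_j=1$, $t_js_k=0$ ($j\ne k$), $\sum_js_jt_j=1$; $C_d$ has the same generators with only $t_js_j=1$, $t_js_k=0$ ($j\ne k$); $L_\infty$ is on $s_1,s_2,\dots,t_1,t_2,\dots$ with $t_js_j=1$, $t_js_k=0$ ($j\ne k$). A representation is a unital algebra homomorphism into $L(E)$. For bounded operators $a$ on $L^p(X,\mu)$ and $b$ on $L^p(Y,\nu)$ ($\sigma$-finite, $p<\infty$), $a\otimes b$ denotes the unique bounded operator on $L^p(X\times Y,\mu\times\nu)$ with $(a\otimes b)(\xi\otimes\eta)=a\xi\otimes b\eta$, where $(\xi\otimes\eta)(x,y)=\xi(x)\eta(y)$; one has $\|a\otimes b\|=\|a\|\|b\|$. *)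

theory Defs
  imports "HOL-Analysis.Analysis"
begin

text \<open>Complex L^p spaces, represented by concrete functions (operators act on representatives,
  equality of operators is equality almost everywhere on L^p).\<close>

type_synonym 'x op = "('x \<Rightarrow> complex) \<Rightarrow> ('x \<Rightarrow> complex)"

definition Lp :: "'x measure \<Rightarrow> real \<Rightarrow> ('x \<Rightarrow> complex) set" where
  "Lp M p = {f. f \<in> borel_measurable M \<and> (\<integral>\<^sup>+ x. ennreal (cmod (f x) powr p) \<partial>M) < \<infinity>}"

definition pnorm :: "'x measure \<Rightarrow> real \<Rightarrow> ('x \<Rightarrow> complex) \<Rightarrow> real" where
  "pnorm M p f = enn2real (\<integral>\<^sup>+ x. ennreal (cmod (f x) powr p) \<partial>M) powr (1 / p)"

definition bounded_op :: "'x measure \<Rightarrow> real \<Rightarrow> 'x op \<Rightarrow> bool" where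
  "bounded_op M p T \<longleftrightarrow>
     (\<forall>f\<in>Lp M p. T f \<in> Lp M p) \<and>
     (\<forall>f\<in>Lp M p. \<forall>g\<in>Lp M p. (AE x in M. f x = g x) \<longrightarrow> (AE x in M. T f x = T g x)) \<and>
     (\<forall>f\<in>Lp M p. \<forall>g\<in>Lp M p. AE x in M. T (\<lambda>y. f y + g y) x = T f x + T g x) \<and>
     (\<forall>f\<in>Lp M p. \<forall>c. AE x in M. T (\<lambda>y. c * f y) x = c * T f x) \<and>
     (\<exists>C. \<forall>f\<in>Lp M p. pnorm M p (T f) \<le> C * pnorm M p f)"

definition op_eq :: "'x measure \<Rightarrow> real \<Rightarrow> 'x op \<Rightarrow> 'x op \<Rightarrow> bool" where
  "op_eq M p T S \<longleftrightarrow> (\<forall>f\<in>Lp M p. AE x in M. T f x = S f x)"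

definition op_norm :: "'x measure \<Rightarrow> real \<Rightarrow> 'x op \<Rightarrow> real" where
  "op_norm M p T = Sup ((\<lambda>f. pnorm M p (T f)) ` {f \<in> Lp M p. pnorm M p f \<le> 1})"

text \<open>Noncommutative polynomials in the generators s_j, t_j (elements of the free algebra);
  every element of L_d, C_d, L_infinity is the image of such a term.\<close>
datatype ncpoly = Scal complex | GenS nat | GenT nat | Add ncpoly ncpoly | Mul ncpoly ncpoly

fun gens_in :: "ncpoly \<Rightarrow> nat set" where
  "gens_in (Scal c) = {}"
| "gens_in (GenS j) = {j}"
| "gens_in (GenT j) = {j}"
| "gens_in (Add P Q) = gens_in P \<union> gens_in Q"
| "gens_in (Mul P Q) = gens_in P \<union> gens_in Q"

fun ev :: "(nat \<Rightarrow> 'x op) \<Rightarrow> (nat \<Rightarrow> 'x op) \<Rightarrow> ncpoly \<Rightarrow> 'x op" where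
  "ev s t (Scal c) = (\<lambda>f x. c * f x)"
| "ev s t (GenS j) = s j"
| "ev s t (GenT j) = t j"
| "ev s t (Add P Q) = (\<lambda>f x. ev s t P f x + ev s t Q f x)"
| "ev s t (Mul P Q) = (\<lambda>f. ev s t P (ev s t Q f))"

datatype alg = L nat | C nat | Linf

fun idx :: "alg \<Rightarrow> nat set" where
  "idx (L d) = {1..d}"
| "idx (C d) = {1..d}"
| "idx Linf = {1..}"

fun valid_alg :: "alg \<Rightarrow> bool" where
  "valid_alg (L d) = (d \<ge> 2)"
| "valid_alg (C d) = (d \<ge> 2)"
| "valid_alg Linf = True"

text \<open>A representation of A on L^p(M), given by the images s j, t j of the generators,
  which must be bounded operators satisfying the defining relations of A.\<close>
definition is_rep :: "alg \<Rightarrow> 'x measure \<Rightarrow> real \<Rightarrow> (nat \<Rightarrow> 'x op) \<Rightarrow> (nat \<Rightarrow> 'x op) \<Rightarrow> bool" where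
  "is_rep A M p s t \<longleftrightarrow>
     (\<forall>j\<in>idx A. bounded_op M p (s j) \<and> bounded_op M p (t j)) \<and>
     (\<forall>j\<in>idx A. \<forall>k\<in>idx A.
        op_eq M p (\<lambda>f. t j (s k f)) (if j = k then (\<lambda>f. f) else (\<lambda>f x. 0))) \<and>
     (case A of L d \<Rightarrow> op_eq M p (\<lambda>f x. \<Sum>j\<in>{1..d}. s j (t j f) x) (\<lambda>f. f) | _ \<Rightarrow> True)"

definition tensor :: "('x \<Rightarrow> complex) \<Rightarrow> ('y \<Rightarrow> complex) \<Rightarrow> ('x \<times> 'y \<Rightarrow> complex)" where
  "tensor \<xi> \<eta> = (\<lambda>(x, y). \<xi> x * \<eta> y)"

definition shift :: "(int \<Rightarrow> complex) \<Rightarrow> (int \<Rightarrow> complex)" where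
  "shift \<eta> = (\<lambda>m. \<eta> (m - 1))"

definition shift_inv :: "(int \<Rightarrow> complex) \<Rightarrow> (int \<Rightarrow> complex)" where
  "shift_inv \<eta> = (\<lambda>m. \<eta> (m + 1))"

end

theory Submission
  imports Defs "HOL-Real_Asymp.Real_Asymp"
begin

(* Expand a term P of the free algebra as a finite sum of
   monomials; a monomial with a occurrences of generators s_j and b occurrences of t_j has
   degree a - b, and under the shifted representation it acts on an elementary tensor as
   (monomial applied to xi) \<otimes> (u^(a-b) eta).  If eta is constant c on the window [-N, N]
   and K bounds the degrees of all monomials of P, then rho_u(P)(xi \<otimes> eta) agrees with
   c \<cdot> rho(P) xi on the strip X \<times> [-(N-K), N-K].  Taking for eta the normalised indicator of
   [-N, N] (a unit vector of l^p(Z)) gives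
     (2(N-K)+1)/(2N+1) \<cdot> \<parallel>rho(P) xi\<parallel>^p \<le> \<parallel>rho_u(P)\<parallel>^p  for \<parallel>xi\<parallel> \<le> 1,
   and letting N \<rightarrow> \<infinity> yields \<parallel>rho(P)\<parallel> \<le> \<parallel>rho_u(P)\<parallel>. *)

abbreviation counting_Z :: "int measure" where
  "counting_Z \<equiv> count_space (UNIV :: int set)"

(* L^p facts. *)

lemma borel_measurable_cmod_powr [measurable]:
  "f \<in> borel_measurable N \<Longrightarrow> (\<lambda>x. cmod (f x) powr p) \<in> borel_measurable N"
  by measurable

lemma Lp_zero: "(\<lambda>x. 0) \<in> Lp N p"
  by (simp add: Lp_def)

lemma pnorm_zero: "p > 0 \<Longrightarrow> pnorm N p (\<lambda>x. 0) = 0"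
  by (simp add: pnorm_def)

lemma pnorm_nonneg: "pnorm N p f \<ge> 0"
  by (simp add: pnorm_def)

lemma pnorm_powr:
  assumes "f \<in> Lp N p" and "p > 0"
  shows "ennreal (pnorm N p f powr p) = (\<integral>\<^sup>+ x. ennreal (cmod (f x) powr p) \<partial>N)"
  using assms by (simp add: pnorm_def Lp_def powr_powr)

lemma Lp_scal:
  assumes f: "f \<in> Lp N p" and p: "p > 0"
  shows "(\<lambda>x. c * f x) \<in> Lp N p" "pnorm N p (\<lambda>x. c * f x) = cmod c * pnorm N p f"
proof -
  have m: "f \<in> borel_measurable N" and fin: "(\<integral>\<^sup>+ x. ennreal (cmod (f x) powr p) \<partial>N) < \<infinity>"
    using f by (auto simp: Lp_def)
  have eq: "(\<integral>\<^sup>+ x. ennreal (cmod (c * f x) powr p) \<partial>N)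
      = ennreal (cmod c powr p) * (\<integral>\<^sup>+ x. ennreal (cmod (f x) powr p) \<partial>N)"
    by (subst nn_integral_cmult[symmetric]) (auto simp: m norm_mult powr_mult ennreal_mult intro: borel_measurable_cmod_powr)
  show "(\<lambda>x. c * f x) \<in> Lp N p"
    using m fin by (simp add: Lp_def eq ennreal_mult_less_top)
  have "pnorm N p (\<lambda>x. c * f x)
      = (cmod c powr p) powr (1/p) * enn2real (\<integral>\<^sup>+ x. ennreal (cmod (f x) powr p) \<partial>N) powr (1/p)"
    unfolding pnorm_def eq by (simp add: enn2real_mult powr_mult)
  also have "(cmod c powr p) powr (1/p) = cmod c"
    using p by (simp add: powr_powr)
  finally show "pnorm N p (\<lambda>x. c * f x) = cmod c * pnorm N p f"
    by (simp add: pnorm_def)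
qed

lemma powr_norm_add_le:
  fixes a b :: complex assumes p: "p > 0"
  shows "cmod (a + b) powr p \<le> 2 powr p * (cmod a powr p + cmod b powr p)"
proof -
  have "cmod (a + b) powr p \<le> (2 * max (cmod a) (cmod b)) powr p"
    using p norm_triangle_ineq[of a b] by (intro powr_mono2) auto
  also have "\<dots> = 2 powr p * max (cmod a) (cmod b) powr p"
    by (simp add: powr_mult)
  also have "max (cmod a) (cmod b) powr p \<le> cmod a powr p + cmod b powr p"
    by (cases "cmod a \<le> cmod b") (auto simp: max_def)
  finally show ?thesis by (simp add: mult_left_mono)
qed

lemma root_add_le:
  fixes a b :: real assumes p: "p \<ge> 1" and a: "a \<ge> 0" and b: "b \<ge> 0"
  shows "(2 powr p * (a + b)) powr (1/p) \<le> 4 * (a powr (1/p) + b powr (1/p))"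
proof -
  have "(2 powr p * (a + b)) powr (1/p) = 2 * (a + b) powr (1/p)"
    using p a b by (simp add: powr_mult powr_powr)
  also have "(a + b) powr (1/p) \<le> (2 * max a b) powr (1/p)"
    using p a b by (intro powr_mono2) auto
  also have "\<dots> = 2 powr (1/p) * max a b powr (1/p)"
    using a b by (simp add: powr_mult)
  also have "2 powr (1/p) \<le> (2::real)"
    using p powr_mono[of "1/p" 1 2] by simp
  also have "max a b powr (1/p) \<le> a powr (1/p) + b powr (1/p)"
    by (cases "a \<le> b") (auto simp: max_def)
  finally show ?thesis
    by (auto simp: mult_left_mono mult_right_mono)
qed

lemma Lp_add:
  assumes f: "f \<in> Lp N p" and g: "g \<in> Lp N p" and p: "p \<ge> 1"
  shows "(\<lambda>x. f x + g x) \<in> Lp N p"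
    "pnorm N p (\<lambda>x. f x + g x) \<le> 4 * (pnorm N p f + pnorm N p g)"
proof -
  define I where "I h = (\<integral>\<^sup>+ x. ennreal (cmod (h x) powr p) \<partial>N)" for h
  have mf: "f \<in> borel_measurable N" and fin: "I f < \<infinity>"
    and mg: "g \<in> borel_measurable N" and gin: "I g < \<infinity>"
    using f g by (auto simp: Lp_def I_def)
  have "I (\<lambda>x. f x + g x)
      \<le> (\<integral>\<^sup>+ x. ennreal (2 powr p) * (ennreal (cmod (f x) powr p) + ennreal (cmod (g x) powr p)) \<partial>N)"
    unfolding I_def using p
    by (intro nn_integral_mono)
       (auto simp: ennreal_mult[symmetric] ennreal_plus[symmetric] powr_norm_add_le simp del: ennreal_plus)
  also have "\<dots> = ennreal (2 powr p) * (I f + I g)"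
    unfolding I_def using mf mg by (subst nn_integral_cmult) (auto simp: nn_integral_add)
  finally have le: "I (\<lambda>x. f x + g x) \<le> ennreal (2 powr p) * (I f + I g)" .
  have fin2: "I (\<lambda>x. f x + g x) < \<infinity>"
    using le fin gin by (simp add: ennreal_mult_less_top le_less_trans)
  show "(\<lambda>x. f x + g x) \<in> Lp N p"
    using fin2 mf mg unfolding Lp_def I_def by auto
  have "enn2real (I (\<lambda>x. f x + g x)) \<le> enn2real (ennreal (2 powr p) * (I f + I g))"
    using le fin gin by (intro enn2real_mono) (auto simp: ennreal_mult_less_top)
  also have "\<dots> = 2 powr p * (enn2real (I f) + enn2real (I g))"
    using fin gin by (simp add: enn2real_mult enn2real_plus)
  finally have "pnorm N p (\<lambda>x. f x + g x) \<le> (2 powr p * (enn2real (I f) + enn2real (I g))) powr (1/p)"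
    unfolding pnorm_def I_def using p by (intro powr_mono2) auto
  also have "\<dots> \<le> 4 * (enn2real (I f) powr (1/p) + enn2real (I g) powr (1/p))"
    using p by (intro root_add_le) auto
  finally show "pnorm N p (\<lambda>x. f x + g x) \<le> 4 * (pnorm N p f + pnorm N p g)"
    unfolding pnorm_def I_def .
qed

lemma Lp_sum_list:
  assumes "p \<ge> 1" and "\<forall>x\<in>set xs. \<phi> x \<in> Lp N p"
  shows "(\<lambda>z. \<Sum>x\<leftarrow>xs. \<phi> x z) \<in> Lp N p"
  using assms(2) by (induction xs) (auto simp: Lp_zero intro: Lp_add(1)[OF _ _ assms(1)])

lemma bounded_opD:
  assumes "bounded_op N p T"
  shows "\<And>f. f \<in> Lp N p \<Longrightarrow> T f \<in> Lp N p"
    "\<And>f g. f \<in> Lp N p \<Longrightarrow> g \<in> Lp N p \<Longrightarrow> (AE x in N. f x = g x) \<Longrightarrow> (AE x in N. T f x = T g x)"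
    "\<And>f g. f \<in> Lp N p \<Longrightarrow> g \<in> Lp N p \<Longrightarrow> AE x in N. T (\<lambda>y. f y + g y) x = T f x + T g x"
    "\<And>f c. f \<in> Lp N p \<Longrightarrow> AE x in N. T (\<lambda>y. c * f y) x = c * T f x"
    "\<exists>C\<ge>0. \<forall>f\<in>Lp N p. pnorm N p (T f) \<le> C * pnorm N p f"
proof -
  show "\<And>f. f \<in> Lp N p \<Longrightarrow> T f \<in> Lp N p"
    "\<And>f g. f \<in> Lp N p \<Longrightarrow> g \<in> Lp N p \<Longrightarrow> (AE x in N. f x = g x) \<Longrightarrow> (AE x in N. T f x = T g x)"
    "\<And>f g. f \<in> Lp N p \<Longrightarrow> g \<in> Lp N p \<Longrightarrow> AE x in N. T (\<lambda>y. f y + g y) x = T f x + T g x"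
    "\<And>f c. f \<in> Lp N p \<Longrightarrow> AE x in N. T (\<lambda>y. c * f y) x = c * T f x"
    using assms unfolding bounded_op_def by blast+
  obtain C where C: "\<forall>f\<in>Lp N p. pnorm N p (T f) \<le> C * pnorm N p f"
    using assms unfolding bounded_op_def by blast
  have "pnorm N p (T f) \<le> max C 0 * pnorm N p f" if "f \<in> Lp N p" for f
    using C that pnorm_nonneg[of N p f] by (smt (verit) mult_right_mono)
  then show "\<exists>C\<ge>0. \<forall>f\<in>Lp N p. pnorm N p (T f) \<le> C * pnorm N p f"
    by (intro exI[of _ "max C 0"]) auto
qed

lemma bounded_op_scal:
  assumes p: "p \<ge> 1" shows "bounded_op N p (\<lambda>f x. c * f x)"
  unfolding bounded_op_def
proof (intro conjI ballI allI impI)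
  show "\<exists>C. \<forall>f\<in>Lp N p. pnorm N p (\<lambda>x. c * f x) \<le> C * pnorm N p f"
    using p by (intro exI[of _ "cmod c"]) (auto simp: Lp_scal(2))
qed (use p in \<open>auto simp: algebra_simps intro: Lp_scal(1)\<close>)

lemma bounded_op_add:
  assumes p: "p \<ge> 1" and T: "bounded_op N p T" and S: "bounded_op N p S"
  shows "bounded_op N p (\<lambda>f x. T f x + S f x)"
proof -
  note T' = bounded_opD[OF T] and S' = bounded_opD[OF S]
  obtain CT where CT: "\<forall>f\<in>Lp N p. pnorm N p (T f) \<le> CT * pnorm N p f" using T'(5) by blast
  obtain CS where CS: "\<forall>f\<in>Lp N p. pnorm N p (S f) \<le> CS * pnorm N p f" using S'(5) by blast
  show ?thesis unfolding bounded_op_def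
  proof (intro conjI ballI allI impI)
    fix f assume "f \<in> Lp N p" thus "(\<lambda>x. T f x + S f x) \<in> Lp N p"
      using T'(1) S'(1) Lp_add p by blast
  next
    fix f g assume f: "f \<in> Lp N p" and g: "g \<in> Lp N p" and e: "AE x in N. f x = g x"
    show "AE x in N. T f x + S f x = T g x + S g x"
      using T'(2)[OF f g e] S'(2)[OF f g e] by eventually_elim simp
  next
    fix f g assume f: "f \<in> Lp N p" and g: "g \<in> Lp N p"
    show "AE x in N. T (\<lambda>y. f y + g y) x + S (\<lambda>y. f y + g y) x = T f x + S f x + (T g x + S g x)"
      using T'(3)[OF f g] S'(3)[OF f g] by eventually_elim simp
  next
    fix f c assume f: "f \<in> Lp N p"
    show "AE x in N. T (\<lambda>y. c * f y) x + S (\<lambda>y. c * f y) x = c * (T f x + S f x)"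
      using T'(4)[OF f, of c] S'(4)[OF f, of c] by eventually_elim (simp add: algebra_simps)
  next
    have "pnorm N p (\<lambda>x. T f x + S f x) \<le> 4 * (CT + CS) * pnorm N p f" if f: "f \<in> Lp N p" for f
    proof -
      have "pnorm N p (\<lambda>x. T f x + S f x) \<le> 4 * (pnorm N p (T f) + pnorm N p (S f))"
        using Lp_add(2)[OF T'(1)[OF f] S'(1)[OF f] p] .
      also have "\<dots> \<le> 4 * (CT * pnorm N p f + CS * pnorm N p f)"
        using CT CS f by (smt (verit))
      finally show ?thesis by (simp add: algebra_simps)
    qed
    then show "\<exists>C. \<forall>f\<in>Lp N p. pnorm N p (\<lambda>x. T f x + S f x) \<le> C * pnorm N p f"
      by blast
  qed
qed

lemma bounded_op_comp:
  assumes p: "p \<ge> 1" and T: "bounded_op N p T" and S: "bounded_op N p S"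
  shows "bounded_op N p (\<lambda>f. T (S f))"
proof -
  note T' = bounded_opD[OF T] and S' = bounded_opD[OF S]
  obtain CT where CT: "CT \<ge> 0" "\<forall>f\<in>Lp N p. pnorm N p (T f) \<le> CT * pnorm N p f" using T'(5) by blast
  obtain CS where CS: "\<forall>f\<in>Lp N p. pnorm N p (S f) \<le> CS * pnorm N p f" using S'(5) by blast
  show ?thesis unfolding bounded_op_def
  proof (intro conjI ballI allI impI)
    fix f assume "f \<in> Lp N p" thus "T (S f) \<in> Lp N p"
      using T'(1) S'(1) by blast
  next
    fix f g assume f: "f \<in> Lp N p" and g: "g \<in> Lp N p" and e: "AE x in N. f x = g x"
    show "AE x in N. T (S f) x = T (S g) x"
      using T'(2)[OF S'(1)[OF f] S'(1)[OF g] S'(2)[OF f g e]] .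
  next
    fix f g assume f: "f \<in> Lp N p" and g: "g \<in> Lp N p"
    have "AE x in N. T (S (\<lambda>y. f y + g y)) x = T (\<lambda>y. S f y + S g y) x"
      using T'(2)[OF S'(1)[OF Lp_add(1)[OF f g p]] Lp_add(1)[OF S'(1)[OF f] S'(1)[OF g] p] S'(3)[OF f g]] .
    then show "AE x in N. T (S (\<lambda>y. f y + g y)) x = T (S f) x + T (S g) x"
      using T'(3)[OF S'(1)[OF f] S'(1)[OF g]] by eventually_elim simp
  next
    fix f c assume f: "f \<in> Lp N p"
    have "AE x in N. T (S (\<lambda>y. c * f y)) x = T (\<lambda>y. c * S f y) x"
      using T'(2)[OF S'(1)[OF Lp_scal(1)[OF f]] Lp_scal(1)[OF S'(1)[OF f]] S'(4)[OF f]] p by auto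
    then show "AE x in N. T (S (\<lambda>y. c * f y)) x = c * T (S f) x"
      using T'(4)[OF S'(1)[OF f], of c] by eventually_elim simp
  next
    have "pnorm N p (T (S f)) \<le> CT * CS * pnorm N p f" if f: "f \<in> Lp N p" for f
    proof -
      have "pnorm N p (T (S f)) \<le> CT * pnorm N p (S f)"
        using CT S'(1)[OF f] by auto
      also have "\<dots> \<le> CT * (CS * pnorm N p f)"
        using CT CS f by (intro mult_left_mono) auto
      finally show ?thesis by (simp add: algebra_simps)
    qed
    then show "\<exists>C. \<forall>f\<in>Lp N p. pnorm N p (T (S f)) \<le> C * pnorm N p f"
      by blast
  qed
qed

lemma bounded_op_ev:
  assumes "p \<ge> 1" and "\<forall>j\<in>J. bounded_op N p (S j) \<and> bounded_op N p (T j)"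
    and "gens_in P \<subseteq> J"
  shows "bounded_op N p (ev S T P)"
  using assms(3) by (induction P) (use assms in \<open>auto intro: bounded_op_scal bounded_op_add bounded_op_comp\<close>)

lemma bounded_op_sum_list:
  assumes p: "p \<ge> 1" and T: "bounded_op N p T" and \<phi>: "\<forall>x\<in>set xs. \<phi> x \<in> Lp N p"
  shows "AE y in N. T (\<lambda>z. \<Sum>x\<leftarrow>xs. \<phi> x z) y = (\<Sum>x\<leftarrow>xs. T (\<phi> x) y)"
  using \<phi>
proof (induction xs)
  case Nil
  have "AE y in N. T (\<lambda>z. 0 * (0::complex)) y = 0 * T (\<lambda>z. 0) y"
    using bounded_opD(4)[OF T Lp_zero] by blast
  thus ?case by simp
next
  case (Cons y xs)
  have "(\<lambda>z. \<Sum>x\<leftarrow>xs. \<phi> x z) \<in> Lp N p" using Lp_sum_list[OF p] Cons by auto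
  then have "AE w in N. T (\<lambda>z. \<phi> y z + (\<Sum>x\<leftarrow>xs. \<phi> x z)) w = T (\<phi> y) w + T (\<lambda>z. \<Sum>x\<leftarrow>xs. \<phi> x z) w"
    using bounded_opD(3)[OF T, of "\<phi> y"] Cons by auto
  with Cons show ?case by (auto elim: AE_mp)
qed

lemma op_norm_upper:
  assumes "bounded_op N p T" and "f \<in> Lp N p" and "pnorm N p f \<le> 1"
  shows "pnorm N p (T f) \<le> op_norm N p T"
proof -
  obtain C where C: "C \<ge> 0" "\<forall>f\<in>Lp N p. pnorm N p (T f) \<le> C * pnorm N p f"
    using bounded_opD(5)[OF assms(1)] by blast
  have "bdd_above ((\<lambda>f. pnorm N p (T f)) ` {f \<in> Lp N p. pnorm N p f \<le> 1})"
    using C by (intro bdd_aboveI[of _ C]) (force intro: order_trans mult_left_le)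
  then show ?thesis
    unfolding op_norm_def using assms(2,3) by (auto intro!: cSup_upper)
qed

lemma op_norm_least:
  assumes "p > 0" and "\<And>f. f \<in> Lp N p \<Longrightarrow> pnorm N p f \<le> 1 \<Longrightarrow> pnorm N p (T f) \<le> B"
  shows "op_norm N p T \<le> B"
  unfolding op_norm_def using assms Lp_zero[of N p] pnorm_zero[of p N]
  by (intro cSup_least) auto

(* Abstractly, let the generators act on a set D of "labels" through
   maps \<sigma> j, \<tau> j and scalars through sc c, and let E : D \<rightarrow> L^p intertwine these maps with
   the operators S j, T j and scalar multiplication.  Then ev S T P (E a) is the sum of
   E (m a) over the monomials m of P.  Each monomial also records its degree: the number
   of generators s_j minus the number of generators t_j occurring in it. *)

fun monomials :: "(nat \<Rightarrow> 'a \<Rightarrow> 'a) \<Rightarrow> (nat \<Rightarrow> 'a \<Rightarrow> 'a) \<Rightarrow> (complex \<Rightarrow> 'a \<Rightarrow> 'a) \<Rightarrow> ncpoly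
    \<Rightarrow> (int \<times> ('a \<Rightarrow> 'a)) list" where
  "monomials \<sigma> \<tau> sc (Scal c) = [(0, sc c)]"
| "monomials \<sigma> \<tau> sc (GenS j) = [(1, \<sigma> j)]"
| "monomials \<sigma> \<tau> sc (GenT j) = [(-1, \<tau> j)]"
| "monomials \<sigma> \<tau> sc (Add P Q) = monomials \<sigma> \<tau> sc P @ monomials \<sigma> \<tau> sc Q"
| "monomials \<sigma> \<tau> sc (Mul P Q) =
     concat (map (\<lambda>d. map (\<lambda>c. (fst c + fst d, \<lambda>a. snd c (snd d a))) (monomials \<sigma> \<tau> sc P))
                 (monomials \<sigma> \<tau> sc Q))"

lemma monomials_closed:
  assumes "\<forall>j\<in>J. \<forall>a\<in>D. \<sigma> j a \<in> D \<and> \<tau> j a \<in> D" and "\<forall>c. \<forall>a\<in>D. sc c a \<in> D"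
    and "gens_in P \<subseteq> J" and "m \<in> set (monomials \<sigma> \<tau> sc P)" and "a \<in> D"
  shows "snd m a \<in> D"
  using assms(3-5) by (induction P arbitrary: m a) (use assms(1,2) in auto)

lemma ev_monomial_expansion:
  assumes p: "p \<ge> 1"
    and bop: "\<forall>j\<in>J. bounded_op N p (S j) \<and> bounded_op N p (T j)"
    and ED: "\<forall>a\<in>D. E a \<in> Lp N p"
    and cl: "\<forall>j\<in>J. \<forall>a\<in>D. \<sigma> j a \<in> D \<and> \<tau> j a \<in> D" "\<forall>c. \<forall>a\<in>D. sc c a \<in> D"
    and genS: "\<forall>j\<in>J. \<forall>a\<in>D. AE x in N. S j (E a) x = E (\<sigma> j a) x"
    and genT: "\<forall>j\<in>J. \<forall>a\<in>D. AE x in N. T j (E a) x = E (\<tau> j a) x"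
    and scal: "\<And>c a. a \<in> D \<Longrightarrow> E (sc c a) = (\<lambda>x. c * E a x)"
    and PJ: "gens_in P \<subseteq> J" and a: "a \<in> D"
  shows "AE x in N. ev S T P (E a) x = (\<Sum>m\<leftarrow>monomials \<sigma> \<tau> sc P. E (snd m a) x)"
  using PJ a
proof (induction P arbitrary: a)
  case (Scal c) thus ?case by (simp add: scal)
next
  case (GenS j) thus ?case using genS by simp
next
  case (GenT j) thus ?case using genT by simp
next
  case (Add P Q)
  have "AE x in N. ev S T P (E a) x = (\<Sum>m\<leftarrow>monomials \<sigma> \<tau> sc P. E (snd m a) x)"
       "AE x in N. ev S T Q (E a) x = (\<Sum>m\<leftarrow>monomials \<sigma> \<tau> sc Q. E (snd m a) x)"
    using Add by auto
  thus ?case by eventually_elim simp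
next
  case (Mul P Q)
  let ?mP = "monomials \<sigma> \<tau> sc P" and ?mQ = "monomials \<sigma> \<tau> sc Q"
  define g where "g = (\<lambda>z. \<Sum>d\<leftarrow>?mQ. E (snd d a) z)"
  have PJ: "gens_in P \<subseteq> J" and QJ: "gens_in Q \<subseteq> J" using Mul by auto
  have bP: "bounded_op N p (ev S T P)" and bQ: "bounded_op N p (ev S T Q)"
    using bounded_op_ev[OF p bop] PJ QJ by auto
  have inD: "\<forall>d\<in>set ?mQ. snd d a \<in> D" using monomials_closed[OF cl QJ] Mul by auto
  have gLp: "g \<in> Lp N p" unfolding g_def using inD ED by (intro Lp_sum_list[OF p]) auto
  have EaLp: "ev S T Q (E a) \<in> Lp N p" using bounded_opD(1)[OF bQ] ED Mul by auto
  have 1: "AE z in N. ev S T P (ev S T Q (E a)) z = ev S T P g z"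
    using bounded_opD(2)[OF bP EaLp gLp] Mul.IH(2)[OF QJ Mul.prems(2)] unfolding g_def by auto
  have 2: "AE z in N. ev S T P g z = (\<Sum>d\<leftarrow>?mQ. ev S T P (E (snd d a)) z)"
    unfolding g_def using inD ED by (intro bounded_op_sum_list[OF p bP]) auto
  have 3: "AE z in N. \<forall>d\<in>set ?mQ. ev S T P (E (snd d a)) z = (\<Sum>c\<leftarrow>?mP. E (snd c (snd d a)) z)"
    using Mul.IH(1)[OF PJ] inD by (subst AE_ball_countable) (auto intro: countable_finite)
  from 1 2 3 show ?case
  proof eventually_elim
    case (elim z)
    then have "ev S T (Mul P Q) (E a) z = (\<Sum>d\<leftarrow>?mQ. \<Sum>c\<leftarrow>?mP. E (snd c (snd d a)) z)"
      by (simp cong: map_cong)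
    moreover have "sum_list (concat xss) = sum_list (map sum_list xss)" for xss :: "complex list list"
      by (induction xss) auto
    ultimately show ?case by (simp add: map_concat o_def)
  qed
qed

definition shiftn :: "int \<Rightarrow> (int \<Rightarrow> complex) \<Rightarrow> (int \<Rightarrow> complex)" where
  "shiftn n \<eta> = (\<lambda>m. \<eta> (m - n))"

lemma shift_eq_shiftn: "shift = shiftn 1" "shift_inv = shiftn (-1)"
  by (auto simp: shift_def shift_inv_def shiftn_def fun_eq_iff)

lemma shiftn_shiftn: "shiftn a (shiftn b \<eta>) = shiftn (a + b) \<eta>"
  by (simp add: shiftn_def algebra_simps)

lemma shiftn_0: "shiftn 0 \<eta> = \<eta>"
  by (simp add: shiftn_def)

lemma Lp_shiftn:
  assumes "\<eta> \<in> Lp counting_Z p"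
  shows "shiftn n \<eta> \<in> Lp counting_Z p"
proof -
  have "bij_betw (\<lambda>m. m - n) (UNIV :: int set) UNIV"
    by (rule bij_betwI[where g="\<lambda>m. m + n"]) auto
  from nn_integral_bij_count_space[OF this, of "\<lambda>m. ennreal (cmod (\<eta> m) powr p)"]
  show ?thesis using assms by (simp add: Lp_def shiftn_def)
qed

text \<open>Tonelli's theorem on M \<times> Z (the counting measure on Z is sigma-finite).\<close>
lemma nn_integral_times_Z:
  assumes "f \<in> borel_measurable (M \<Otimes>\<^sub>M counting_Z)"
  shows "(\<integral>\<^sup>+ z. f z \<partial>(M \<Otimes>\<^sub>M counting_Z)) = (\<integral>\<^sup>+ x. \<integral>\<^sup>+ m. f (x, m) \<partial>counting_Z \<partial>M)"
  using sigma_finite_measure.nn_integral_fst[OF sigma_finite_measure_count_space assms] by simp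

lemma AE_times_Z:
  assumes "AE x in M. P x"
  shows "AE z in M \<Otimes>\<^sub>M counting_Z. P (fst z)"
proof -
  obtain S where S: "{x \<in> space M. \<not> P x} \<subseteq> S" "S \<in> null_sets M"
    using assms by (auto elim!: AE_E3)
  have "S \<times> UNIV \<in> null_sets (M \<Otimes>\<^sub>M counting_Z)"
    by (rule sigma_finite_measure.times_in_null_sets1[OF sigma_finite_measure_count_space S(2)]) simp
  then show ?thesis
    using S(1) by (intro AE_I'[of "S \<times> UNIV"]) (auto simp: space_pair_measure)
qed

lemma tensor_Lp:
  assumes x: "\<xi> \<in> Lp M p" and e: "\<eta> \<in> Lp counting_Z p" and p: "p > 0"
  shows "tensor \<xi> \<eta> \<in> Lp (M \<Otimes>\<^sub>M counting_Z) p"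
    "(\<integral>\<^sup>+ z. ennreal (cmod (tensor \<xi> \<eta> z) powr p) \<partial>(M \<Otimes>\<^sub>M counting_Z))
     = (\<integral>\<^sup>+ x. ennreal (cmod (\<xi> x) powr p) \<partial>M) * (\<integral>\<^sup>+ m. ennreal (cmod (\<eta> m) powr p) \<partial>counting_Z)"
proof -
  have mx: "\<xi> \<in> borel_measurable M" using x by (simp add: Lp_def)
  have "(\<lambda>z. \<xi> (fst z) * \<eta> (snd z)) \<in> borel_measurable (M \<Otimes>\<^sub>M counting_Z)"
    using mx by measurable
  then have mt: "tensor \<xi> \<eta> \<in> borel_measurable (M \<Otimes>\<^sub>M counting_Z)"
    by (simp add: tensor_def case_prod_beta')
  have "(\<integral>\<^sup>+ z. ennreal (cmod (tensor \<xi> \<eta> z) powr p) \<partial>(M \<Otimes>\<^sub>M counting_Z))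
    = (\<integral>\<^sup>+ x. \<integral>\<^sup>+ m. ennreal (cmod (\<xi> x) powr p) * ennreal (cmod (\<eta> m) powr p) \<partial>counting_Z \<partial>M)"
    using mt by (subst nn_integral_times_Z) (auto simp: tensor_def norm_mult powr_mult ennreal_mult)
  also have "\<dots> = (\<integral>\<^sup>+ x. ennreal (cmod (\<xi> x) powr p) * (\<integral>\<^sup>+ m. ennreal (cmod (\<eta> m) powr p) \<partial>counting_Z) \<partial>M)"
    by (subst nn_integral_cmult) auto
  also have "\<dots> = (\<integral>\<^sup>+ x. ennreal (cmod (\<xi> x) powr p) \<partial>M) * (\<integral>\<^sup>+ m. ennreal (cmod (\<eta> m) powr p) \<partial>counting_Z)"
    using mx by (subst nn_integral_multc) (auto intro: borel_measurable_cmod_powr)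
  finally show eq: "(\<integral>\<^sup>+ z. ennreal (cmod (tensor \<xi> \<eta> z) powr p) \<partial>(M \<Otimes>\<^sub>M counting_Z))
     = (\<integral>\<^sup>+ x. ennreal (cmod (\<xi> x) powr p) \<partial>M) * (\<integral>\<^sup>+ m. ennreal (cmod (\<eta> m) powr p) \<partial>counting_Z)" .
  show "tensor \<xi> \<eta> \<in> Lp (M \<Otimes>\<^sub>M counting_Z) p"
    using mt x e unfolding Lp_def by (simp add: eq ennreal_mult_less_top)
qed

definition bump :: "real \<Rightarrow> nat \<Rightarrow> int \<Rightarrow> complex" where
  "bump p N m = (if \<bar>m\<bar> \<le> int N then complex_of_real (real (2 * N + 1) powr (-1/p)) else 0)"

lemma bump_height_powr:
  assumes "p > 0"
  shows "(real (2 * N + 1) powr (-1/p)) powr p = 1 / real (2 * N + 1)"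
proof -
  have "(real (2 * N + 1) powr (-1/p)) powr p = real (2 * N + 1) powr ((-1/p) * p)"
    by (rule powr_powr)
  also have "(-1/p) * p = -1"
    using assms by simp
  finally show ?thesis
    by (simp add: powr_minus_divide)
qed

lemma bump_integral:
  assumes "p > 0"
  shows "(\<integral>\<^sup>+ m. ennreal (cmod (bump p N m) powr p) \<partial>counting_Z) = 1"
proof -
  have "(\<lambda>m. ennreal (cmod (bump p N m) powr p))
      = (\<lambda>m. ennreal (1 / real (2 * N + 1)) * indicator {-int N..int N} m)"
    using assms bump_height_powr[OF assms] by (auto simp: bump_def fun_eq_iff indicator_def abs_le_iff)
  moreover have "card {-int N..int N} = 2 * N + 1"
    by simp
  ultimately have "(\<integral>\<^sup>+ m. ennreal (cmod (bump p N m) powr p) \<partial>counting_Z)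
      = ennreal (1 / real (2 * N + 1)) * ennreal (real (2 * N + 1))"
    by (simp add: nn_integral_cmult_indicator ennreal_of_nat_eq_real_of_nat)
  also have "\<dots> = ennreal (1 / real (2 * N + 1) * real (2 * N + 1))"
    by (rule ennreal_mult[symmetric]) auto
  finally show ?thesis
    by simp
qed

lemma bump_Lp: "p > 0 \<Longrightarrow> bump p N \<in> Lp counting_Z p"
  by (simp add: Lp_def bump_integral)

lemma pnorm_tensor_bump:
  assumes "\<xi> \<in> Lp M p" and "p > 0"
  shows "pnorm (M \<Otimes>\<^sub>M counting_Z) p (tensor \<xi> (bump p N)) = pnorm M p \<xi>"
  unfolding pnorm_def tensor_Lp(2)[OF assms(1) bump_Lp[OF assms(2)] assms(2)] bump_integral[OF assms(2)]
  by simp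

definition tensor_shift_pair :: "nat set \<Rightarrow> 'x measure \<Rightarrow> real \<Rightarrow> (nat \<Rightarrow> 'x op) \<Rightarrow> (nat \<Rightarrow> 'x op)
    \<Rightarrow> (nat \<Rightarrow> ('x \<times> int) op) \<Rightarrow> (nat \<Rightarrow> ('x \<times> int) op) \<Rightarrow> bool" where
  "tensor_shift_pair J M p s t su tu \<longleftrightarrow>
     (\<forall>j\<in>J. bounded_op M p (s j) \<and> bounded_op M p (t j)) \<and>
     (\<forall>j\<in>J. bounded_op (M \<Otimes>\<^sub>M counting_Z) p (su j) \<and> bounded_op (M \<Otimes>\<^sub>M counting_Z) p (tu j)) \<and>
     (\<forall>j\<in>J. \<forall>\<xi>\<in>Lp M p. \<forall>\<eta>\<in>Lp counting_Z p.
        AE z in M \<Otimes>\<^sub>M counting_Z. su j (tensor \<xi> \<eta>) z = tensor (s j \<xi>) (shift \<eta>) z) \<and>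
     (\<forall>j\<in>J. \<forall>\<xi>\<in>Lp M p. \<forall>\<eta>\<in>Lp counting_Z p.
        AE z in M \<Otimes>\<^sub>M counting_Z. tu j (tensor \<xi> \<eta>) z = tensor (t j \<xi>) (shift_inv \<eta>) z)"

text \<open>The generators act on labels (\<xi>, \<eta>) of elementary tensors \<xi> \<otimes> \<eta>.\<close>
definition pair_s :: "(nat \<Rightarrow> 'x op) \<Rightarrow> nat \<Rightarrow> ('x \<Rightarrow> complex) \<times> (int \<Rightarrow> complex)
    \<Rightarrow> ('x \<Rightarrow> complex) \<times> (int \<Rightarrow> complex)" where
  "pair_s s j a = (s j (fst a), shiftn 1 (snd a))"

definition pair_t :: "(nat \<Rightarrow> 'x op) \<Rightarrow> nat \<Rightarrow> ('x \<Rightarrow> complex) \<times> (int \<Rightarrow> complex)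
    \<Rightarrow> ('x \<Rightarrow> complex) \<times> (int \<Rightarrow> complex)" where
  "pair_t t j a = (t j (fst a), shiftn (-1) (snd a))"

definition pair_scal :: "complex \<Rightarrow> ('x \<Rightarrow> complex) \<times> (int \<Rightarrow> complex)
    \<Rightarrow> ('x \<Rightarrow> complex) \<times> (int \<Rightarrow> complex)" where
  "pair_scal c a = ((\<lambda>x. c * fst a x), snd a)"

abbreviation pair_monomials :: "(nat \<Rightarrow> 'x op) \<Rightarrow> (nat \<Rightarrow> 'x op) \<Rightarrow> ncpoly
    \<Rightarrow> (int \<times> (('x \<Rightarrow> complex) \<times> (int \<Rightarrow> complex) \<Rightarrow> ('x \<Rightarrow> complex) \<times> (int \<Rightarrow> complex))) list" where
  "pair_monomials s t \<equiv> monomials (pair_s s) (pair_t t) pair_scal"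

lemma pair_monomial_shift:
  "m \<in> set (pair_monomials s t P) \<Longrightarrow> snd (snd m a) = shiftn (fst m) (snd a)"
proof (induction P arbitrary: m a)
  case (Mul P Q)
  then obtain m1 d where m1: "m1 \<in> set (pair_monomials s t P)" and d: "d \<in> set (pair_monomials s t Q)"
    and m: "m = (fst m1 + fst d, \<lambda>a. snd m1 (snd d a))" by auto
  have "snd (snd m a) = shiftn (fst m1) (snd (snd d a))" using m Mul.IH(1)[OF m1] by simp
  also have "\<dots> = shiftn (fst m) (snd a)" using m Mul.IH(2)[OF d] by (simp add: shiftn_shiftn)
  finally show ?case .
qed (auto simp: pair_s_def pair_t_def pair_scal_def shiftn_0)

lemma ev_pair_expansion:
  assumes p: "1 \<le> p" and rep: "tensor_shift_pair J M p s t su tu" and PJ: "gens_in P \<subseteq> J"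
    and a: "a \<in> Lp M p \<times> Lp counting_Z p"
  shows "AE x in M. ev s t P (fst a) x = (\<Sum>m\<leftarrow>pair_monomials s t P. fst (snd m a) x)"
    "AE z in M \<Otimes>\<^sub>M counting_Z. ev su tu P (tensor (fst a) (snd a)) z
        = (\<Sum>m\<leftarrow>pair_monomials s t P. tensor (fst (snd m a)) (snd (snd m a)) z)"
proof -
  let ?D = "Lp M p \<times> Lp counting_Z p"
  note rep' = rep[unfolded tensor_shift_pair_def]
  have cl1: "\<forall>j\<in>J. \<forall>a\<in>?D. pair_s s j a \<in> ?D \<and> pair_t t j a \<in> ?D"
    using rep' by (auto simp: pair_s_def pair_t_def intro: Lp_shiftn bounded_opD(1))
  have cl2: "\<forall>c. \<forall>a\<in>?D. pair_scal c a \<in> ?D"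
    using p by (auto simp: pair_scal_def intro: Lp_scal(1))
  show "AE x in M. ev s t P (fst a) x = (\<Sum>m\<leftarrow>pair_monomials s t P. fst (snd m a) x)"
    using rep' by (intro ev_monomial_expansion[OF p _ _ cl1 cl2 _ _ _ PJ a])
      (auto simp: pair_s_def pair_t_def pair_scal_def)
  show "AE z in M \<Otimes>\<^sub>M counting_Z. ev su tu P (tensor (fst a) (snd a)) z
        = (\<Sum>m\<leftarrow>pair_monomials s t P. tensor (fst (snd m a)) (snd (snd m a)) z)"
  proof (rule ev_monomial_expansion[OF p _ _ cl1 cl2 _ _ _ PJ a, where E="\<lambda>a. tensor (fst a) (snd a)"])
    show "\<forall>a\<in>?D. tensor (fst a) (snd a) \<in> Lp (M \<Otimes>\<^sub>M counting_Z) p"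
      using p by (auto intro: tensor_Lp(1))
    show "\<And>c a. tensor (fst (pair_scal c a)) (snd (pair_scal c a)) = (\<lambda>z. c * tensor (fst a) (snd a) z)"
      by (auto simp: pair_scal_def tensor_def fun_eq_iff)
  qed (use rep' in \<open>auto simp: pair_s_def pair_t_def shift_eq_shiftn\<close>)
qed

lemma ev_tensor_window:
  assumes p: "1 \<le> p" and rep: "tensor_shift_pair J M p s t su tu" and PJ: "gens_in P \<subseteq> J"
  obtains K :: int where
    "\<And>\<xi> \<eta> c N. \<xi> \<in> Lp M p \<Longrightarrow> \<eta> \<in> Lp counting_Z p \<Longrightarrow> (\<forall>n. \<bar>n\<bar> \<le> N \<longrightarrow> \<eta> n = c) \<Longrightarrow>
      AE z in M \<Otimes>\<^sub>M counting_Z. \<bar>snd z\<bar> \<le> N - K \<longrightarrow>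
        ev su tu P (tensor \<xi> \<eta>) z = c * ev s t P \<xi> (fst z)"
proof
  let ?ms = "pair_monomials s t P"
  define K where "K = (\<Sum>m\<leftarrow>?ms. \<bar>fst m\<bar>)"
  have deg: "\<bar>fst m\<bar> \<le> K" if "m \<in> set ?ms" for m
    unfolding K_def using that by (intro member_le_sum_list) auto
  fix \<xi> \<eta> c N
  assume \<xi>: "\<xi> \<in> Lp M p" and \<eta>: "\<eta> \<in> Lp counting_Z p" and const: "\<forall>n. \<bar>n\<bar> \<le> N \<longrightarrow> \<eta> n = c"
  define a where "a = (\<xi>, \<eta>)"
  have a: "a \<in> Lp M p \<times> Lp counting_Z p" using \<xi> \<eta> by (simp add: a_def)
  note expansion = ev_pair_expansion[OF p rep PJ a]
  from AE_times_Z[OF expansion(1)] expansion(2)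
  show "AE z in M \<Otimes>\<^sub>M counting_Z. \<bar>snd z\<bar> \<le> N - K \<longrightarrow>
      ev su tu P (tensor \<xi> \<eta>) z = c * ev s t P \<xi> (fst z)"
  proof eventually_elim
    case (elim z)
    obtain x n where z: "z = (x, n)" by fastforce
    have "tensor (fst (snd m a)) (snd (snd m a)) (x, n) = c * fst (snd m a) x"
      if "m \<in> set ?ms" and "\<bar>n\<bar> \<le> N - K" for m
      using deg[OF that(1)] that(2) const pair_monomial_shift[OF that(1), of a]
      by (simp add: tensor_def shiftn_def a_def)
    then show ?case
      using elim by (auto simp: z a_def sum_list_const_mult cong: map_cong)
  qed
qed

lemma window_lower_bound:
  fixes R :: "'x \<times> int \<Rightarrow> complex" and V :: "'x \<Rightarrow> complex" and L :: int
  assumes R: "R \<in> borel_measurable (M \<Otimes>\<^sub>M counting_Z)" and V: "V \<in> borel_measurable M"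
    and L: "L \<ge> 0" and eq: "AE z in M \<Otimes>\<^sub>M counting_Z. \<bar>snd z\<bar> \<le> L \<longrightarrow> R z = c * V (fst z)"
  shows "ennreal (real_of_int (2 * L + 1) * cmod c powr p) * (\<integral>\<^sup>+ x. ennreal (cmod (V x) powr p) \<partial>M)
    \<le> (\<integral>\<^sup>+ z. ennreal (cmod (R z) powr p) \<partial>(M \<Otimes>\<^sub>M counting_Z))"
proof -
  define w where "w x = ennreal (cmod c powr p * cmod (V x) powr p)" for x
  have w: "w \<in> borel_measurable M"
    unfolding w_def using V by measurable
  have "ennreal (real_of_int (2 * L + 1) * cmod c powr p) * (\<integral>\<^sup>+ x. ennreal (cmod (V x) powr p) \<partial>M)
      = (\<integral>\<^sup>+ x. ennreal (real_of_int (2 * L + 1) * cmod c powr p) * ennreal (cmod (V x) powr p) \<partial>M)"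
    by (rule nn_integral_cmult[symmetric]) (use V in measurable)
  also have "\<dots> = (\<integral>\<^sup>+ x. \<integral>\<^sup>+ n. w x * indicator {-L..L} n \<partial>counting_Z \<partial>M)"
  proof (intro nn_integral_cong)
    fix x
    have "card {-L..L} = nat (2 * L + 1)" by simp
    then have "(\<integral>\<^sup>+ n. w x * indicator {-L..L} n \<partial>counting_Z) = w x * ennreal (real_of_int (2 * L + 1))"
      using L by (simp add: nn_integral_cmult_indicator ennreal_of_nat_eq_real_of_nat)
    also have "\<dots> = ennreal (cmod c powr p * cmod (V x) powr p * real_of_int (2 * L + 1))"
      unfolding w_def by (rule ennreal_mult[symmetric]) (use L in auto)
    also have "\<dots> = ennreal (real_of_int (2 * L + 1) * cmod c powr p) * ennreal (cmod (V x) powr p)"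
      using L by (subst ennreal_mult[symmetric]) (auto simp: mult_ac)
    finally show "ennreal (real_of_int (2 * L + 1) * cmod c powr p) * ennreal (cmod (V x) powr p)
      = (\<integral>\<^sup>+ n. w x * indicator {-L..L} n \<partial>counting_Z)" ..
  qed
  also have "\<dots> = (\<integral>\<^sup>+ z. w (fst z) * indicator {-L..L} (snd z) \<partial>(M \<Otimes>\<^sub>M counting_Z))"
  proof -
    have "(\<lambda>z. w (fst z) * indicator {-L..L} (snd z)) \<in> borel_measurable (M \<Otimes>\<^sub>M counting_Z)"
      by (rule borel_measurable_times_ennreal[OF measurable_compose[OF measurable_fst w]
            measurable_compose[OF measurable_snd]]) simp
    then show ?thesis
      by (simp only: nn_integral_times_Z fst_conv snd_conv)
  qed
  also have "\<dots> \<le> (\<integral>\<^sup>+ z. ennreal (cmod (R z) powr p) \<partial>(M \<Otimes>\<^sub>M counting_Z))"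
    using eq
  proof (intro nn_integral_mono_AE, eventually_elim)
    case (elim z)
    show ?case
    proof (cases "\<bar>snd z\<bar> \<le> L")
      case True
      then have "cmod (R z) powr p = cmod c powr p * cmod (V (fst z)) powr p"
        using elim by (simp add: norm_mult powr_mult)
      with True show ?thesis
        by (simp add: w_def indicator_def abs_le_iff)
    qed (auto simp: indicator_def abs_le_iff)
  qed
  finally show ?thesis .
qed

lemma shifted_window_estimate:
  assumes p: "1 \<le> p" and rep: "tensor_shift_pair J M p s t su tu" and PJ: "gens_in P \<subseteq> J"
  obtains K :: int where
    "\<And>\<xi> N. \<xi> \<in> Lp M p \<Longrightarrow> int N \<ge> K \<Longrightarrow>
      (2 * real N - 2 * real_of_int K + 1) / (2 * real N + 1) * pnorm M p (ev s t P \<xi>) powr p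
        \<le> pnorm (M \<Otimes>\<^sub>M counting_Z) p (ev su tu P (tensor \<xi> (bump p N))) powr p"
proof -
  obtain K where window:
    "\<And>\<xi> \<eta> c N. \<xi> \<in> Lp M p \<Longrightarrow> \<eta> \<in> Lp counting_Z p \<Longrightarrow> (\<forall>n. \<bar>n\<bar> \<le> N \<longrightarrow> \<eta> n = c) \<Longrightarrow>
      AE z in M \<Otimes>\<^sub>M counting_Z. \<bar>snd z\<bar> \<le> N - K \<longrightarrow>
        ev su tu P (tensor \<xi> \<eta>) z = c * ev s t P \<xi> (fst z)"
    by (rule ev_tensor_window[OF p rep PJ]) blast
  have p0: "p > 0" using p by simp
  note rep' = rep[unfolded tensor_shift_pair_def]
  have "(2 * real N - 2 * real_of_int K + 1) / (2 * real N + 1) * pnorm M p (ev s t P \<xi>) powr p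
      \<le> pnorm (M \<Otimes>\<^sub>M counting_Z) p (ev su tu P (tensor \<xi> (bump p N))) powr p"
    if \<xi>: "\<xi> \<in> Lp M p" and NK: "int N \<ge> K" for \<xi> N
  proof -
    let ?q = "(2 * real N - 2 * real_of_int K + 1) / (2 * real N + 1)"
    define c where "c = complex_of_real (real (2 * N + 1) powr (-1/p))"
    define V where "V = ev s t P \<xi>"
    define R where "R = ev su tu P (tensor \<xi> (bump p N))"
    have V: "V \<in> Lp M p"
      unfolding V_def using bounded_opD(1)[OF bounded_op_ev[of p J M s t P]] p rep' PJ \<xi> by blast
    have R: "R \<in> Lp (M \<Otimes>\<^sub>M counting_Z) p"
      unfolding R_def using bounded_opD(1)[OF bounded_op_ev[of p J "M \<Otimes>\<^sub>M counting_Z" su tu P]]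
        p rep' PJ tensor_Lp(1)[OF \<xi> bump_Lp[OF p0] p0] by blast
    have "AE z in M \<Otimes>\<^sub>M counting_Z. \<bar>snd z\<bar> \<le> int N - K \<longrightarrow> R z = c * V (fst z)"
      unfolding R_def V_def using window[OF \<xi> bump_Lp[OF p0]] by (simp add: bump_def c_def)
    then have "ennreal (real_of_int (2 * (int N - K) + 1) * cmod c powr p) * (\<integral>\<^sup>+ x. ennreal (cmod (V x) powr p) \<partial>M)
        \<le> (\<integral>\<^sup>+ z. ennreal (cmod (R z) powr p) \<partial>(M \<Otimes>\<^sub>M counting_Z))"
      using R V NK by (intro window_lower_bound) (auto simp: Lp_def)
    moreover have "real_of_int (2 * (int N - K) + 1) * cmod c powr p = ?q"
      using bump_height_powr[OF p0, of N] by (simp add: c_def)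
    ultimately have "ennreal ?q * ennreal (pnorm M p V powr p) \<le> ennreal (pnorm (M \<Otimes>\<^sub>M counting_Z) p R powr p)"
      by (simp only: pnorm_powr[OF V p0, symmetric] pnorm_powr[OF R p0, symmetric])
    moreover have "?q \<ge> 0" using NK by simp
    ultimately show ?thesis
      unfolding R_def V_def by (simp add: ennreal_mult[symmetric] ennreal_le_iff)
  qed
  then show ?thesis using that by blast
qed

lemma le_of_ratio_limit:
  fixes q :: "nat \<Rightarrow> real"
  assumes "q \<longlonglongrightarrow> 1" and "\<And>N. N \<ge> start \<Longrightarrow> q N * a \<le> b"
  shows "a \<le> b"
  using LIMSEQ_le_const2[OF tendsto_mult_right[OF assms(1), of a]] assms(2) by auto

lemma pnorm_ev_le_shifted_op_norm:
  assumes p: "1 \<le> p" and rep: "tensor_shift_pair J M p s t su tu" and PJ: "gens_in P \<subseteq> J"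
    and \<xi>: "\<xi> \<in> Lp M p" "pnorm M p \<xi> \<le> 1"
  shows "pnorm M p (ev s t P \<xi>) \<le> op_norm (M \<Otimes>\<^sub>M counting_Z) p (ev su tu P)"
proof -
  let ?B = "op_norm (M \<Otimes>\<^sub>M counting_Z) p (ev su tu P)"
  have p0: "p > 0" using p by simp
  obtain K where estimate:
    "\<And>\<xi> N. \<xi> \<in> Lp M p \<Longrightarrow> int N \<ge> K \<Longrightarrow>
      (2 * real N - 2 * real_of_int K + 1) / (2 * real N + 1) * pnorm M p (ev s t P \<xi>) powr p
        \<le> pnorm (M \<Otimes>\<^sub>M counting_Z) p (ev su tu P (tensor \<xi> (bump p N))) powr p"
    by (rule shifted_window_estimate[OF p rep PJ]) blast
  have bounded: "bounded_op (M \<Otimes>\<^sub>M counting_Z) p (ev su tu P)"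
    using rep PJ by (intro bounded_op_ev[OF p]) (auto simp: tensor_shift_pair_def)
  have unit: "tensor \<xi> (bump p N) \<in> Lp (M \<Otimes>\<^sub>M counting_Z) p"
    "pnorm (M \<Otimes>\<^sub>M counting_Z) p (tensor \<xi> (bump p N)) \<le> 1" for N
    using tensor_Lp(1)[OF \<xi>(1) bump_Lp[OF p0] p0] pnorm_tensor_bump[OF \<xi>(1) p0] \<xi>(2) by auto
  have shifted_le: "pnorm (M \<Otimes>\<^sub>M counting_Z) p (ev su tu P (tensor \<xi> (bump p N))) \<le> ?B" for N
    using op_norm_upper[OF bounded unit] .
  have B0: "?B \<ge> 0"
    using pnorm_nonneg shifted_le[of 0] by (rule order_trans)
  have ratio: "(2 * real N - 2 * real_of_int K + 1) / (2 * real N + 1) * pnorm M p (ev s t P \<xi>) powr p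
      \<le> ?B powr p" if "N \<ge> nat K" for N
  proof -
    have "int N \<ge> K" using that by linarith
    then have "(2 * real N - 2 * real_of_int K + 1) / (2 * real N + 1) * pnorm M p (ev s t P \<xi>) powr p
        \<le> pnorm (M \<Otimes>\<^sub>M counting_Z) p (ev su tu P (tensor \<xi> (bump p N))) powr p"
      by (rule estimate[OF \<xi>(1)])
    also have "\<dots> \<le> ?B powr p"
      using shifted_le p0 pnorm_nonneg by (intro powr_mono2) auto
    finally show ?thesis .
  qed
  have limit: "(\<lambda>N. (2 * real N - 2 * real_of_int K + 1) / (2 * real N + 1)) \<longlonglongrightarrow> 1"
    by real_asymp
  have "pnorm M p (ev s t P \<xi>) = (pnorm M p (ev s t P \<xi>) powr p) powr (1/p)"
    using p0 pnorm_nonneg[of M p "ev s t P \<xi>"] by (simp add: powr_powr)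
  also have "\<dots> \<le> (?B powr p) powr (1/p)"
    using le_of_ratio_limit[where start="nat K", OF limit ratio] p0 by (auto intro: powr_mono2)
  also have "\<dots> = ?B"
    using p0 B0 by (simp add: powr_powr)
  finally show ?thesis .
qed

theorem proposition8p3:
  fixes A :: alg and p :: real and M :: "'x measure"
    and s t :: "nat \<Rightarrow> 'x op" and su tu :: "nat \<Rightarrow> ('x \<times> int) op"
  assumes "valid_alg A"
    and "1 \<le> p"
    and "sigma_finite_measure M"
    and "is_rep A M p s t"
    and "is_rep A (M \<Otimes>\<^sub>M count_space (UNIV :: int set)) p su tu"
    and "\<forall>j\<in>idx A. \<forall>\<xi>\<in>Lp M p. \<forall>\<eta>\<in>Lp (count_space (UNIV :: int set)) p.
           AE z in M \<Otimes>\<^sub>M count_space (UNIV :: int set).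
             su j (tensor \<xi> \<eta>) z = tensor (s j \<xi>) (shift \<eta>) z"
    and "\<forall>j\<in>idx A. \<forall>\<xi>\<in>Lp M p. \<forall>\<eta>\<in>Lp (count_space (UNIV :: int set)) p.
           AE z in M \<Otimes>\<^sub>M count_space (UNIV :: int set).
             tu j (tensor \<xi> \<eta>) z = tensor (t j \<xi>) (shift_inv \<eta>) z"
  shows "\<forall>P. gens_in P \<subseteq> idx A \<longrightarrow>
           op_norm (M \<Otimes>\<^sub>M count_space (UNIV :: int set)) p (ev su tu P) \<ge> op_norm M p (ev s t P)"
proof (intro allI impI)
  fix P assume PJ: "gens_in P \<subseteq> idx A"
  have rep: "tensor_shift_pair (idx A) M p s t su tu"
    using assms(4-7) unfolding is_rep_def tensor_shift_pair_def by blast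
  show "op_norm M p (ev s t P) \<le> op_norm (M \<Otimes>\<^sub>M counting_Z) p (ev su tu P)"
    using assms(2) by (intro op_norm_least pnorm_ev_le_shifted_op_norm[OF assms(2) rep PJ]) auto
qed

end
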